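(* Let $G=(V,E)$ be a finite undirected graph, let $k>2$ be an integer, let $C$ be a legitimate configuration (as defined in the context), and let $s\in S(C)$. Then for every node $u\in V$ with $\mathrm{dist}(u,s)\le\lfloor k/2\rfloor$, we have $d_u=\mathrm{dist}(u,s)$.
   Context: $\mathrm{dist}$ is the graph distance in $G$ and $N(u)$ the neighbourhood of $u$. Let $m=\lfloor k/2\rfloor$. A configuration $C$ assigns to each node $u$ the values $d_u\in\{0,\dots,k-1\}$, $err_u\in\{0,1\}$, and for each $i\in\{1,\dots,m-1\}$ a clock value $c_{i,u}\in\mathbb{Z}/4\mathbb{Z}$ and an arrow $b_{i,u}\in\{\uparrow,\downarrow\}$. Let $S(C)=\{u\in V: d_u=0\}$. Predicates on a node $u$: - $\mathrm{well\_defined}(u)$: $err_u=0$, $|d_u-d_v|\le 1$ for all $v\in N(u)$, and if $d_u>0$ then some $v\in N(u)$ has $d_v=d_u-1$. - $\mathrm{leader\_down}(u)$: if $d_u=0$ then $b_{i,u}=\downarrow$ for all $i\in\{1,\dots,m-1\}$. - $\mathrm{bc\_up}(u,i)$: for every $v\in N(u)$ with $d_v=d_u-1$, $(b_{i,u},b_{i,v},c_{i,v})\in\{(\uparrow,\uparrow,c_{i,u}),(\uparrow,\downarrow,c_{i,u}),(\uparrow,\downarrow,c_{i,u}+1),(\downarrow,\downarrow,c_{i,u})\}$. - $\mathrm{bc\_down}(u,i)$: for every $v\in N(u)$ with $d_v=d_u+1$, $(b_{i,u},b_{i,v},c_{i,v})\in\{(\uparrow,\uparrow,c_{i,u}),(\downarrow,\uparrow,c_{i,u}),(\downarrow,\uparrow,c_{i,u}-1),(\downarrow,\downarrow,c_{i,u})\}$.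 - $\mathrm{branch\_coherence}(u)$: either $d_u\ge m$, or ($\mathrm{bc\_up}(u,d_u)$ holds, and $\mathrm{bc\_up}(u,i)$ and $\mathrm{bc\_down}(u,i)$ hold for all $i\in\{d_u+1,\dots,m-1\}$). (For $d_u=0$ the condition $\mathrm{bc\_up}(u,0)$ is vacuous.) Clock arithmetic is in $\mathbb{Z}/4\mathbb{Z}$. A configuration $C$ is legitimate if every node $u$ satisfies $\mathrm{well\_defined}(u)$, $\mathrm{leader\_down}(u)$ and $\mathrm{branch\_coherence}(u)$, and any two distinct nodes of $S(C)$ are at distance at least $k$ in $G$. *)

theory Defs
  imports Main "HOL-Library.Extended_Nat" "HOL-Library.Numeral_Type"
begin

definition undirected_graph :: "'v set \<Rightarrow> ('v \<Rightarrow> 'v \<Rightarrow> bool) \<Rightarrow> bool" where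
  "undirected_graph V E \<longleftrightarrow> finite V \<and> (\<forall>u v. E u v \<longrightarrow> u \<in> V \<and> v \<in> V)
     \<and> (\<forall>u v. E u v \<longrightarrow> E v u) \<and> (\<forall>u. \<not> E u u)"

definition nbhd :: "'v set \<Rightarrow> ('v \<Rightarrow> 'v \<Rightarrow> bool) \<Rightarrow> 'v \<Rightarrow> 'v set" where
  "nbhd V E u = {v \<in> V. E u v}"

definition gdist :: "'v set \<Rightarrow> ('v \<Rightarrow> 'v \<Rightarrow> bool) \<Rightarrow> 'v \<Rightarrow> 'v \<Rightarrow> enat" where
  "gdist V E u v = Inf {enat (length xs - 1) | xs. xs \<noteq> [] \<and> hd xs = u \<and> last xs = v
      \<and> set xs \<subseteq> V \<and> (\<forall>i. i + 1 < length xs \<longrightarrow> E (xs ! i) (xs ! (i + 1)))}"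

datatype arrow = Up | Down

text \<open>Configuration: d, err, clocks c i u in Z/4Z (type 4), arrows b i u.\<close>
record 'v config =
  d :: "'v \<Rightarrow> nat"
  err :: "'v \<Rightarrow> nat"
  clk :: "nat \<Rightarrow> 'v \<Rightarrow> 4"
  arr :: "nat \<Rightarrow> 'v \<Rightarrow> arrow"

definition config_range :: "nat \<Rightarrow> 'v set \<Rightarrow> 'v config \<Rightarrow> bool" where
  "config_range k V C \<longleftrightarrow> (\<forall>u\<in>V. d C u < k \<and> err C u \<le> 1)"

definition S_set :: "'v set \<Rightarrow> 'v config \<Rightarrow> 'v set" where
  "S_set V C = {u \<in> V. d C u = 0}"

definition well_defined :: "'v set \<Rightarrow> ('v \<Rightarrow> 'v \<Rightarrow> bool) \<Rightarrow> 'v config \<Rightarrow> 'v \<Rightarrow> bool" where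
  "well_defined V E C u \<longleftrightarrow> err C u = 0
     \<and> (\<forall>v\<in>nbhd V E u. \<bar>int (d C u) - int (d C v)\<bar> \<le> 1)
     \<and> (d C u > 0 \<longrightarrow> (\<exists>v\<in>nbhd V E u. d C v + 1 = d C u))"

definition leader_down :: "nat \<Rightarrow> 'v config \<Rightarrow> 'v \<Rightarrow> bool" where
  "leader_down k C u \<longleftrightarrow> (d C u = 0 \<longrightarrow> (\<forall>i\<in>{1..<k div 2}. arr C i u = Down))"

definition bc_up :: "'v set \<Rightarrow> ('v \<Rightarrow> 'v \<Rightarrow> bool) \<Rightarrow> 'v config \<Rightarrow> 'v \<Rightarrow> nat \<Rightarrow> bool" where
  "bc_up V E C u i \<longleftrightarrow> (\<forall>v\<in>nbhd V E u. d C v + 1 = d C u \<longrightarrow>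
     (arr C i u, arr C i v, clk C i v) \<in>
       {(Up, Up, clk C i u), (Up, Down, clk C i u), (Up, Down, clk C i u + 1), (Down, Down, clk C i u)})"

definition bc_down :: "'v set \<Rightarrow> ('v \<Rightarrow> 'v \<Rightarrow> bool) \<Rightarrow> 'v config \<Rightarrow> 'v \<Rightarrow> nat \<Rightarrow> bool" where
  "bc_down V E C u i \<longleftrightarrow> (\<forall>v\<in>nbhd V E u. d C v = d C u + 1 \<longrightarrow>
     (arr C i u, arr C i v, clk C i v) \<in>
       {(Up, Up, clk C i u), (Down, Up, clk C i u), (Down, Up, clk C i u - 1), (Down, Down, clk C i u)})"

definition branch_coherence :: "nat \<Rightarrow> 'v set \<Rightarrow> ('v \<Rightarrow> 'v \<Rightarrow> bool) \<Rightarrow> 'v config \<Rightarrow> 'v \<Rightarrow> bool" where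
  "branch_coherence k V E C u \<longleftrightarrow> d C u \<ge> k div 2 \<or>
     (bc_up V E C u (d C u) \<and>
      (\<forall>i\<in>{d C u + 1..<k div 2}. bc_up V E C u i \<and> bc_down V E C u i))"

definition legitimate :: "nat \<Rightarrow> 'v set \<Rightarrow> ('v \<Rightarrow> 'v \<Rightarrow> bool) \<Rightarrow> 'v config \<Rightarrow> bool" where
  "legitimate k V E C \<longleftrightarrow> config_range k V C \<and>
     (\<forall>u\<in>V. well_defined V E C u \<and> leader_down k C u \<and> branch_coherence k V E C u) \<and>
     (\<forall>s\<in>S_set V C. \<forall>t\<in>S_set V C. s \<noteq> t \<longrightarrow> gdist V E s t \<ge> enat k)"

end

theory Submission
  imports Defs
begin

(* Along every edge the value d changes by at most one, so d u is at most the distance from u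
   to any node of value zero; in particular d u <= dist(u,s). Conversely, following strictly
   decreasing values of d from u reaches, after d u steps, a node t with d t = 0. If d u were
   smaller than g = dist(u,s) <= k div 2, then t <> s and dist(s,t) <= g + d u < 2 g <= k,
   contradicting the separation of the nodes of value zero. *)

definition walk :: "'v set \<Rightarrow> ('v \<Rightarrow> 'v \<Rightarrow> bool) \<Rightarrow> 'v \<Rightarrow> 'v \<Rightarrow> 'v list \<Rightarrow> bool" where
  "walk V E u v xs \<longleftrightarrow> xs \<noteq> [] \<and> hd xs = u \<and> last xs = v \<and> set xs \<subseteq> V \<and> successively E xs"

lemma gdist_eq_Inf_walks: "gdist V E u v = Inf {enat (length xs - 1) | xs. walk V E u v xs}"
  unfolding gdist_def walk_def successively_conv_nth by simp

lemma gdist_le_walk_length: "walk V E u v xs \<Longrightarrow> gdist V E u v \<le> enat (length xs - 1)"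
  unfolding gdist_eq_Inf_walks by (rule Inf_lower) blast

lemma walk_of_gdist_eq:
  assumes "gdist V E u v = enat n"
  obtains xs where "walk V E u v xs" "length xs - 1 = n"
proof -
  let ?A = "{enat (length xs - 1) | xs. walk V E u v xs}"
  have "?A \<noteq> {}"
  proof
    assume "?A = {}"
    with assms show False unfolding gdist_eq_Inf_walks by (simp add: Inf_enat_def)
  qed
  then obtain a where "a \<in> ?A" by blast
  then have "Inf ?A \<in> ?A" by (rule wellorder_InfI)
  with assms that show ?thesis unfolding gdist_eq_Inf_walks by auto
qed

lemma walk_rev:
  assumes "undirected_graph V E" "walk V E u v xs"
  shows "walk V E v u (rev xs)"
proof -
  have "successively (\<lambda>x y. E y x) xs"
    using assms unfolding walk_def undirected_graph_def by (auto elim: successively_mono)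
  then show ?thesis using assms(2) by (auto simp: walk_def hd_rev last_rev)
qed

lemma walk_append:
  assumes "walk V E u v xs" "walk V E v w ys"
  shows "walk V E u w (xs @ tl ys)" "length (xs @ tl ys) - 1 = (length xs - 1) + (length ys - 1)"
proof -
  obtain ys' where ys: "ys = v # ys'"
    using assms(2) unfolding walk_def by (cases ys) auto
  show "walk V E u w (xs @ tl ys)"
    using assms ys unfolding walk_def
    by (auto simp: successively_append_iff successively_Cons last_append)
  show "length (xs @ tl ys) - 1 = (length xs - 1) + (length ys - 1)"
    using assms(1) ys by (cases xs) (auto simp: walk_def)
qed

lemma gdist_sym:
  assumes "undirected_graph V E"
  shows "gdist V E u v = gdist V E v u"
proof -
  have "gdist V E v u \<le> gdist V E u v" for u v
  proof (cases "gdist V E u v")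
    case (enat n)
    then obtain xs where "walk V E u v xs" "length xs - 1 = n" by (rule walk_of_gdist_eq)
    then have "gdist V E v u \<le> enat (length (rev xs) - 1)"
      by (intro gdist_le_walk_length walk_rev[OF assms])
    with enat \<open>length xs - 1 = n\<close> show ?thesis by simp
  qed simp
  from this[of u v] this[of v u] show ?thesis by (rule antisym)
qed

lemma gdist_triangle: "gdist V E u w \<le> gdist V E u v + gdist V E v w"
proof (cases "gdist V E u v" "gdist V E v w" rule: enat2_cases)
  case (enat_enat m n)
  obtain xs where xs: "walk V E u v xs" "length xs - 1 = m"
    using enat_enat(1) by (rule walk_of_gdist_eq)
  obtain ys where ys: "walk V E v w ys" "length ys - 1 = n"
    using enat_enat(2) by (rule walk_of_gdist_eq)
  have "gdist V E u w \<le> enat ((length xs - 1) + (length ys - 1))"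
    using gdist_le_walk_length walk_append[OF xs(1) ys(1)] by metis
  with xs(2) ys(2) enat_enat show ?thesis by simp
qed auto

lemma walk_Lipschitz:
  assumes "\<And>x y. E x y \<Longrightarrow> x \<in> V \<Longrightarrow> y \<in> V \<Longrightarrow> f x \<le> f y + (1::nat)"
  shows "walk V E u v xs \<Longrightarrow> f u \<le> f v + (length xs - 1)"
proof (induction xs arbitrary: u)
  case Nil
  then show ?case by (simp add: walk_def)
next
  case (Cons x xs)
  show ?case
  proof (cases xs)
    case Nil
    then show ?thesis using Cons.prems by (auto simp: walk_def)
  next
    case (Cons y ys)
    with Cons.prems have walk: "walk V E y v xs" and edge: "E u y" "u \<in> V" "y \<in> V"
      by (auto simp: walk_def)
    from edge have "f u \<le> f y + 1" by (rule assms)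
    moreover from walk have "f y \<le> f v + (length xs - 1)" by (rule Cons.IH)
    ultimately show ?thesis using Cons by simp
  qed
qed

lemma gdist_Lipschitz:
  assumes "\<And>x y. E x y \<Longrightarrow> x \<in> V \<Longrightarrow> y \<in> V \<Longrightarrow> f x \<le> f y + (1::nat)"
  shows "enat (f u) \<le> gdist V E u v + enat (f v)"
proof (cases "gdist V E u v")
  case (enat n)
  then obtain xs where xs: "walk V E u v xs" "length xs - 1 = n" by (rule walk_of_gdist_eq)
  from walk_Lipschitz[of E V f, OF assms xs(1)] xs(2) enat show ?thesis by simp
qed simp

lemma well_defined_d_Lipschitz:
  assumes "well_defined V E C x" "E x y" "y \<in> V"
  shows "d C x \<le> d C y + 1"
proof -
  have "\<bar>int (d C x) - int (d C y)\<bar> \<le> 1"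
    using assms unfolding well_defined_def nbhd_def by blast
  then show ?thesis by linarith
qed

lemma well_defined_d_le_gdist:
  assumes "\<forall>w\<in>V. well_defined V E C w" "d C s = 0"
  shows "enat (d C u) \<le> gdist V E u s"
proof -
  have "d C x \<le> d C y + 1" if "E x y" "x \<in> V" "y \<in> V" for x y
    using well_defined_d_Lipschitz[OF bspec[OF assms(1) that(2)] that(1,3)] .
  from gdist_Lipschitz[of E V "d C", OF this, of u s] assms(2) show ?thesis
    by (simp flip: zero_enat_def)
qed

lemma well_defined_descent:
  assumes "\<forall>w\<in>V. well_defined V E C w" "u \<in> V"
  obtains t where "t \<in> V" "d C t = 0" "gdist V E u t \<le> enat (d C u)"
proof -
  have "\<exists>t\<in>V. d C t = 0 \<and> gdist V E u t \<le> enat n" if "u \<in> V" "d C u = n" for u n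
    using that
  proof (induction n arbitrary: u)
    case 0
    then show ?case
      using gdist_le_walk_length[of V E u u "[u]"] by (force simp: walk_def)
  next
    case (Suc n)
    then obtain v where v: "v \<in> V" "E u v" "d C v = n"
      using assms(1) unfolding well_defined_def nbhd_def by fastforce
    with Suc.IH obtain t where t: "t \<in> V" "d C t = 0" "gdist V E v t \<le> enat n" by blast
    have "walk V E u v [u, v]" using v Suc.prems(1) by (simp add: walk_def)
    then have "gdist V E u v \<le> 1" using gdist_le_walk_length by (fastforce simp: one_enat_def)
    then have "gdist V E u t \<le> 1 + enat n"
      using gdist_triangle[of V E u t v] t(3) by (meson add_mono order_trans)
    with t show ?case by (auto simp: one_enat_def)
  qed
  with assms(2) that show ?thesis by blast
qed

theorem lemma2:
  fixes V :: "'v set" and E :: "'v \<Rightarrow> 'v \<Rightarrow> bool" and k :: nat and C :: "'v config"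
  assumes "undirected_graph V E"
    and "k > 2"
    and "legitimate k V E C"
    and "s \<in> S_set V C"
    and "u \<in> V"
    and "gdist V E u s \<le> enat (k div 2)"
  shows "enat (d C u) = gdist V E u s"
proof -
  have wd: "\<forall>w\<in>V. well_defined V E C w" using assms(3) by (simp add: legitimate_def)
  have "d C s = 0" using assms(4) by (simp add: S_set_def)
  obtain g where g: "gdist V E u s = enat g" "g \<le> k div 2"
    using assms(6) by (cases "gdist V E u s") auto
  from wd \<open>d C s = 0\<close> have "enat (d C u) \<le> gdist V E u s" by (rule well_defined_d_le_gdist)
  moreover have "g \<le> d C u"
  proof (rule ccontr)
    assume short: "\<not> g \<le> d C u"
    obtain t where t: "t \<in> V" "d C t = 0" "gdist V E u t \<le> enat (d C u)"
      using well_defined_descent[OF wd assms(5)] .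
    have "t \<noteq> s" using t(3) g(1) short by auto
    have "gdist V E s t \<le> gdist V E s u + gdist V E u t" by (rule gdist_triangle)
    also have "\<dots> = enat g + gdist V E u t" using gdist_sym[OF assms(1), of s u] g(1) by simp
    also have "\<dots> \<le> enat g + enat (d C u)" using t(3) by (rule add_left_mono)
    also have "\<dots> < enat k" using short g(2) by simp
    finally have "gdist V E s t < enat k" .
    moreover have "enat k \<le> gdist V E s t"
      using assms(3,4) t(1,2) \<open>t \<noteq> s\<close> unfolding legitimate_def S_set_def by auto
    ultimately show False by simp
  qed
  ultimately show ?thesis using g(1) by simp
qed

end
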